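(* Consider the airfoil system $\ddot x_1+2G^1(x,\dot x)=0$, $\ddot x_2+2G^2(x,\dot x)=0$ with $y_i=\dot x_i$, $$G^1=\frac{6V^2M^2x_2^3-6000Mx_2^3+30V^2x_2+30V^2y_1+19V^2y_2+240VMy_1-60VMy_2+1200Mx_1-300Mx_2}{2100V^2M},$$ $$G^2=-\frac{18V^2M^2x_2^3-60000Mx_2^3+90V^2x_2+90V^2y_1+85V^2y_2+300VMy_1-600VMy_2+1500Mx_1-3000Mx_2}{5250V^2M},$$ where $M=M_\infty>0$ and $V>0$ are real parameters. Define $R_1=-9450V^2M-43V^2+135VM+621900M^2$, $R_2=1800V^4M+1500V^3M^2-15660000V^2M^3+4V^4+20V^3M-123675V^2M^2+297000VM^3+769590000M^4$, $R_3=-V^2+50M$, $R_4=V^2M-5000$, $R_5=-18900V^4M^2+43V^4M-135V^3M^2+795600V^2M^3+47250000V^2M-215000V^2+675000VM-1615500000M^2$, $R_6=3600V^6M^2+3000V^5M^3-31320000V^4M^4-4V^6M-20V^5M^2-146325V^4M^3-522000V^3M^4+1579410000V^2M^5-4500000V^4M-532500000V^3M^2+155250000000V^2M^3+20000V^4+100000V^3M+56625000V^2M^2+28485000000VM^3-7829550000000M^4$, and assume the genericity condition $(M-10)R_1R_2R_3R_4R_5R_6\neq0$. Then: (a) the system has exactly one Jacobi stable fixed point if and only if one of the following holds: (i) $R_1>0,R_2>0,R_4>0,R_5>0,R_6>0$; (ii) $R_1>0,R_2>0,R_3>0,R_4<0$; (iii) $R_1>0,R_2>0,R_3>0,R_4>0,R_5<0,R_6>0$;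 (b) the system has exactly two Jacobi stable fixed points if and only if one of the following holds: (i) $R_1<0,R_3<0,R_4<0,R_5>0,R_6>0$; (ii) $R_1>0,R_2<0,R_3<0,R_4<0,R_5>0,R_6>0$.
   Context: This is the dimensionless aeroelastic airfoil model with cubic pitching nonlinearity in supersonic flow ($x_1$ plunge, $x_2$ pitch, $M_\infty$ the flight Mach number, $V$ a dimensionless velocity), after fixing the remaining airfoil constants. Fixed points are points $(x_1,x_2)\in\mathbb{R}^2$ with $G^1(x,0)=G^2(x,0)=0$. Einstein summation is used; $N^i_j=\partial G^i/\partial y_j$, $G^i_{j\ell}=\partial N^i_j/\partial y_\ell$, and the deviation curvature tensor is $P^i_j=-2\frac{\partial G^i}{\partial x_j}-2G^\ell G^i_{j\ell}+y_\ell\frac{\partial N^i_j}{\partial x_\ell}+N^i_\ell N^\ell_j$. A fixed point $\bar x$ is Jacobi stable if all eigenvalues of the $2\times 2$ matrix $(P^i_j)$ evaluated at $(x,y)=(\bar x,0)$ have strictly negative real parts. *)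

theory Defs
  imports "HOL-Analysis.Derivative" "Jordan_Normal_Form.Char_Poly"
begin

(* States: x, y :: nat => real, only the coordinates 1 and 2 are used.
   A spray coefficient family G :: nat => (nat => real) => (nat => real) => real,
   G i x y = G^i(x,y), for i in {1,2}. *)

definition vec2 :: "real \<Rightarrow> real \<Rightarrow> nat \<Rightarrow> real" where
  "vec2 a b = (\<lambda>j. if j = 1 then a else if j = 2 then b else 0)"

definition pdx :: "((nat \<Rightarrow> real) \<Rightarrow> (nat \<Rightarrow> real) \<Rightarrow> real) \<Rightarrow> nat \<Rightarrow> (nat \<Rightarrow> real) \<Rightarrow> (nat \<Rightarrow> real) \<Rightarrow> real" where
  "pdx F j x y = deriv (\<lambda>t. F (x(j := t)) y) (x j)"

definition pdy :: "((nat \<Rightarrow> real) \<Rightarrow> (nat \<Rightarrow> real) \<Rightarrow> real) \<Rightarrow> nat \<Rightarrow> (nat \<Rightarrow> real) \<Rightarrow> (nat \<Rightarrow> real) \<Rightarrow> real" where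
  "pdy F j x y = deriv (\<lambda>t. F x (y(j := t))) (y j)"

type_synonym spray = "nat \<Rightarrow> (nat \<Rightarrow> real) \<Rightarrow> (nat \<Rightarrow> real) \<Rightarrow> real"

definition Ncoef :: "spray \<Rightarrow> nat \<Rightarrow> nat \<Rightarrow> (nat \<Rightarrow> real) \<Rightarrow> (nat \<Rightarrow> real) \<Rightarrow> real" where
  "Ncoef G i j = pdy (G i) j"

definition Gcoef :: "spray \<Rightarrow> nat \<Rightarrow> nat \<Rightarrow> nat \<Rightarrow> (nat \<Rightarrow> real) \<Rightarrow> (nat \<Rightarrow> real) \<Rightarrow> real" where
  "Gcoef G i j l = pdy (Ncoef G i j) l"

definition Pdev :: "spray \<Rightarrow> nat \<Rightarrow> nat \<Rightarrow> (nat \<Rightarrow> real) \<Rightarrow> (nat \<Rightarrow> real) \<Rightarrow> real" where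
  "Pdev G i j x y =
     - 2 * pdx (G i) j x y
     - 2 * (\<Sum>l\<in>{1..2}. G l x y * Gcoef G i j l x y)
     + (\<Sum>l\<in>{1..2}. y l * pdx (Ncoef G i j) l x y)
     + (\<Sum>l\<in>{1..2}. Ncoef G i l x y * Ncoef G l j x y)"

definition zero_vel :: "nat \<Rightarrow> real" where
  "zero_vel = (\<lambda>_. 0)"

definition Pmat :: "spray \<Rightarrow> (nat \<Rightarrow> real) \<Rightarrow> complex mat" where
  "Pmat G x = mat 2 2 (\<lambda>(i, j). complex_of_real (Pdev G (i + 1) (j + 1) x zero_vel))"

definition is_fixed_point :: "spray \<Rightarrow> real \<times> real \<Rightarrow> bool" where
  "is_fixed_point G p = (G 1 (vec2 (fst p) (snd p)) zero_vel = 0 \<and> G 2 (vec2 (fst p) (snd p)) zero_vel = 0)"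

definition jacobi_stable :: "spray \<Rightarrow> real \<times> real \<Rightarrow> bool" where
  "jacobi_stable G p = (\<forall>k. eigenvalue (Pmat G (vec2 (fst p) (snd p))) k \<longrightarrow> Re k < 0)"

definition jacobi_stable_fixed_points :: "spray \<Rightarrow> (real \<times> real) set" where
  "jacobi_stable_fixed_points G = {p. is_fixed_point G p \<and> jacobi_stable G p}"

definition airfoilG :: "real \<Rightarrow> real \<Rightarrow> spray" where
  "airfoilG M V i x y =
    (if i = 1 then
       (6*V^2*M^2*(x 2)^3 - 6000*M*(x 2)^3 + 30*V^2*x 2 + 30*V^2*y 1 + 19*V^2*y 2
        + 240*V*M*y 1 - 60*V*M*y 2 + 1200*M*x 1 - 300*M*x 2) / (2100*V^2*M)
     else if i = 2 then
       - (18*V^2*M^2*(x 2)^3 - 60000*M*(x 2)^3 + 90*V^2*x 2 + 90*V^2*y 1 + 85*V^2*y 2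
          + 300*V*M*y 1 - 600*V*M*y 2 + 1500*M*x 1 - 3000*M*x 2) / (5250*V^2*M)
     else 0)"

definition R1 :: "real \<Rightarrow> real \<Rightarrow> real" where
  "R1 M V = -9450*V^2*M - 43*V^2 + 135*V*M + 621900*M^2"

definition R2 :: "real \<Rightarrow> real \<Rightarrow> real" where
  "R2 M V = 1800*V^4*M + 1500*V^3*M^2 - 15660000*V^2*M^3 + 4*V^4 + 20*V^3*M
     - 123675*V^2*M^2 + 297000*V*M^3 + 769590000*M^4"

definition R3 :: "real \<Rightarrow> real \<Rightarrow> real" where
  "R3 M V = - (V^2) + 50*M"

definition R4 :: "real \<Rightarrow> real \<Rightarrow> real" where
  "R4 M V = V^2*M - 5000"

definition R5 :: "real \<Rightarrow> real \<Rightarrow> real" where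
  "R5 M V = -18900*V^4*M^2 + 43*V^4*M - 135*V^3*M^2 + 795600*V^2*M^3 + 47250000*V^2*M
     - 215000*V^2 + 675000*V*M - 1615500000*M^2"

definition R6 :: "real \<Rightarrow> real \<Rightarrow> real" where
  "R6 M V = 3600*V^6*M^2 + 3000*V^5*M^3 - 31320000*V^4*M^4 - 4*V^6*M - 20*V^5*M^2
     - 146325*V^4*M^3 - 522000*V^3*M^4 + 1579410000*V^2*M^5 - 4500000*V^4*M
     - 532500000*V^3*M^2 + 155250000000*V^2*M^3 + 20000*V^4 + 100000*V^3*M
     + 56625000*V^2*M^2 + 28485000000*V*M^3 - 7829550000000*M^4"

end

theory Submission
  imports Defs
begin

(* At zero velocity, and at a fixed point where G vanishes, the deviation curvature reduces to
   P = -2 dG/dx + N N. For the airfoil N is constant and dG/dx depends only on x_2^2, so P is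
   a real 2x2 matrix depending on x_2^2, and Jacobi stability is the Routh-Hurwitz condition
   tr P < 0 < det P. The fixed points are x_2 = 0 and the pair x_2^2 = 5 R3/(M R4) (x_1 is
   determined by x_2); there the Hurwitz conditions read R1 > 0, R2 > 0 and R5/R4 < 0,
   R6/R4 < 0 respectively. Two polynomial sign implications, R1 > 0 and R3 < 0 force R2 < 0,
   and R3, R4 > 0 force R6 > 0, reduce the count to the listed sign patterns. *)

lemma det_2_by_2:
  fixes A :: "'a::comm_ring_1 mat"
  assumes A: "A \<in> carrier_mat 2 2"
  shows "det A = A $$ (0,0) * A $$ (1,1) - A $$ (0,1) * A $$ (1,0)"
proof -
  have "det A = (\<Sum>i<2. A $$ (i,0) * cofactor A i 0)"
    by (rule laplace_expansion_column[OF A]) simp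
  also have "\<dots> = A $$ (0,0) * cofactor A 0 0 + A $$ (1,0) * cofactor A 1 0"
    by (simp add: numeral_2_eq_2)
  also have "cofactor A 0 0 = A $$ (1,1)"
    unfolding cofactor_def using A by (subst det_single) (auto simp: mat_delete_def)
  also have "cofactor A 1 0 = - A $$ (0,1)"
    unfolding cofactor_def using A by (subst det_single) (auto simp: mat_delete_def)
  finally show ?thesis by (simp add: algebra_simps)
qed

lemma Re_neg_of_quadratic_root:
  fixes T D :: real and k :: complex
  assumes "T < 0" "0 < D" and root: "k\<^sup>2 - of_real T * k + of_real D = 0"
  shows "Re k < 0"
proof -
  from root have re: "(Re k)\<^sup>2 - (Im k)\<^sup>2 - T * Re k + D = 0"
    and im: "Im k * (2 * Re k - T) = 0"
    by (simp_all add: complex_eq_iff power2_eq_square algebra_simps)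
  show ?thesis
  proof (cases "Im k = 0")
    case True
    with re have "(Re k)\<^sup>2 + (- T) * Re k + D = 0" by simp
    show ?thesis
    proof (rule ccontr)
      assume "\<not> Re k < 0"
      with \<open>T < 0\<close> have "0 \<le> (- T) * Re k"
        by (intro mult_nonneg_nonneg) simp_all
      with \<open>0 < D\<close> zero_le_power2[of "Re k"] \<open>(Re k)\<^sup>2 + (- T) * Re k + D = 0\<close>
      show False by linarith
    qed
  next
    case False
    with im have "2 * Re k = T" by simp
    with assms(1) show ?thesis by simp
  qed
qed

lemma quadratic_root_Re_nonneg:
  fixes T D :: real
  assumes "\<not> (T < 0 \<and> 0 < D)"
  shows "\<exists>k::complex. k\<^sup>2 - of_real T * k + of_real D = 0 \<and> 0 \<le> Re k"
proof -
  define d where "d = csqrt (of_real (T\<^sup>2 - 4 * D))"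
  define k where "k = (of_real T + d) / 2"
  have "k\<^sup>2 - of_real T * k + of_real D = (d\<^sup>2 - of_real (T\<^sup>2 - 4 * D)) / 4"
    unfolding k_def by (simp add: field_simps power2_eq_square)
  then have root: "k\<^sup>2 - of_real T * k + of_real D = 0"
    unfolding d_def by simp
  have "0 \<le> T + Re d"
  proof (cases "0 \<le> T")
    case True
    then show ?thesis using Re_csqrt[of "of_real (T\<^sup>2 - 4 * D)"] unfolding d_def by linarith
  next
    case False
    with assms have "T\<^sup>2 \<le> T\<^sup>2 - 4 * D" by simp
    then have "sqrt (T\<^sup>2) \<le> sqrt (T\<^sup>2 - 4 * D)" by (rule real_sqrt_le_mono)
    moreover have "0 \<le> T\<^sup>2 - 4 * D"
      using \<open>T\<^sup>2 \<le> T\<^sup>2 - 4 * D\<close> zero_le_power2[of T] by linarith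
    ultimately show ?thesis using False unfolding d_def by simp
  qed
  then have "0 \<le> Re k" unfolding k_def by simp
  with root show ?thesis by blast
qed

lemma quadratic_roots_Re_neg_iff:
  fixes T D :: real
  shows "(\<forall>k::complex. k\<^sup>2 - of_real T * k + of_real D = 0 \<longrightarrow> Re k < 0) \<longleftrightarrow> T < 0 \<and> 0 < D"
  using Re_neg_of_quadratic_root quadratic_root_Re_nonneg by (meson not_less)

lemma eigenvalues_Re_neg_real_mat_2_iff:
  fixes f :: "nat \<Rightarrow> nat \<Rightarrow> real"
  shows "(\<forall>k. eigenvalue (mat 2 2 (\<lambda>(i,j). complex_of_real (f i j))) k \<longrightarrow> Re k < 0) \<longleftrightarrow>
         f 0 0 + f 1 1 < 0 \<and> 0 < f 0 0 * f 1 1 - f 0 1 * f 1 0"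
proof -
  let ?A = "mat 2 2 (\<lambda>(i,j). complex_of_real (f i j))"
  have "det (char_matrix ?A k) =
      k\<^sup>2 - of_real (f 0 0 + f 1 1) * k + of_real (f 0 0 * f 1 1 - f 0 1 * f 1 0)" for k
    by (subst det_2_by_2) (auto simp: char_matrix_def algebra_simps power2_eq_square)
  then have "eigenvalue ?A k \<longleftrightarrow>
      k\<^sup>2 - of_real (f 0 0 + f 1 1) * k + of_real (f 0 0 * f 1 1 - f 0 1 * f 1 0) = 0" for k
    using eigenvalue_det[of ?A 2 k] by simp
  then show ?thesis by (simp only: quadratic_roots_Re_neg_iff)
qed

lemma card_zero_or_square_eq:
  fixes s :: real and P :: "real \<Rightarrow> bool"
  assumes "s \<noteq> 0"
  shows "card {q. (q = 0 \<or> q\<^sup>2 = s) \<and> P (q\<^sup>2)} = of_bool (P 0) + 2 * of_bool (0 < s \<and> P s)"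
proof -
  have square_eq: "{q. q\<^sup>2 = s} = (if 0 < s then {sqrt s, - sqrt s} else {})"
    using assms by (auto simp: real_sqrt_unique)
  have "{q. (q = 0 \<or> q\<^sup>2 = s) \<and> P (q\<^sup>2)} =
      (if P 0 then {0} else {}) \<union> (if P s then {q. q\<^sup>2 = s} else {})"
    by auto
  moreover have "card ((if P 0 then {0} else {}) \<union> (if P s then {q. q\<^sup>2 = s} else {})) =
      of_bool (P 0) + 2 * of_bool (0 < s \<and> P s)"
    using assms unfolding square_eq by auto
  ultimately show ?thesis by simp
qed

lemma Pdev_at_fixed_point:
  assumes "G 1 x zero_vel = 0" "G 2 x zero_vel = 0"
  shows "Pdev G i j x zero_vel =
    - 2 * pdx (G i) j x zero_vel + (\<Sum>l\<in>{1..2}. Ncoef G i l x zero_vel * Ncoef G l j x zero_vel)"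
proof -
  have "(\<Sum>l\<in>{1..2::nat}. G l x zero_vel * Gcoef G i j l x zero_vel) = 0"
    using assms by (simp add: numeral_2_eq_2)
  moreover have "(\<Sum>l\<in>{1..2::nat}. zero_vel l * pdx (Ncoef G i j) l x zero_vel) = 0"
    by (simp add: zero_vel_def)
  ultimately show ?thesis unfolding Pdev_def by simp
qed

definition airfoilN :: "real \<Rightarrow> real \<Rightarrow> nat \<Rightarrow> nat \<Rightarrow> real" where
  "airfoilN M V i j =
    (if i = 1 then (if j = 1 then (30*V^2 + 240*V*M) / (2100*V^2*M)
                    else if j = 2 then (19*V^2 - 60*V*M) / (2100*V^2*M) else 0)
     else if i = 2 then (if j = 1 then - (90*V^2 + 300*V*M) / (5250*V^2*M)
                         else if j = 2 then - (85*V^2 - 600*V*M) / (5250*V^2*M) else 0)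
     else 0)"

definition airfoilJ :: "real \<Rightarrow> real \<Rightarrow> real \<Rightarrow> nat \<Rightarrow> nat \<Rightarrow> real" where
  "airfoilJ M V w i j =
    (if i = 1 then (if j = 1 then 1200*M / (2100*V^2*M)
                    else (3*(6*V^2*M^2 - 6000*M)*w + 30*V^2 - 300*M) / (2100*V^2*M))
     else (if j = 1 then - (1500*M) / (5250*V^2*M)
           else - (3*(18*V^2*M^2 - 60000*M)*w + 90*V^2 - 3000*M) / (5250*V^2*M)))"

lemma Ncoef_airfoilG:
  assumes "M > 0" "V > 0"
  shows "Ncoef (airfoilG M V) i j x y = airfoilN M V i j"
proof -
  have "((\<lambda>t. airfoilG M V i x (y(j := t))) has_real_derivative airfoilN M V i j) (at (y j))"
    using assms unfolding airfoilG_def airfoilN_def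
    by (cases "i = 1"; cases "i = 2"; cases "j = 1"; cases "j = 2";
        auto intro!: derivative_eq_intros simp: field_simps)
  then show ?thesis unfolding Ncoef_def pdy_def by (rule DERIV_imp_deriv)
qed

lemma pdx_airfoilG:
  assumes "M > 0" "V > 0" "i \<in> {1,2}" "j \<in> {1,2}"
  shows "pdx (airfoilG M V i) j (vec2 p q) zero_vel = airfoilJ M V (q\<^sup>2) i j"
proof -
  have "((\<lambda>t. airfoilG M V i ((vec2 p q)(j := t)) zero_vel) has_real_derivative airfoilJ M V (q\<^sup>2) i j)
      (at (vec2 p q j))"
    using assms unfolding airfoilG_def airfoilJ_def vec2_def zero_vel_def
    by (cases "i = 1"; cases "j = 1";
        auto intro!: derivative_eq_intros simp: field_simps power2_eq_square power3_eq_cube)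
  then show ?thesis unfolding pdx_def by (rule DERIV_imp_deriv)
qed

definition airfoilP :: "real \<Rightarrow> real \<Rightarrow> real \<Rightarrow> nat \<Rightarrow> nat \<Rightarrow> real" where
  "airfoilP M V w i j =
    - 2 * airfoilJ M V w i j + airfoilN M V i 1 * airfoilN M V 1 j + airfoilN M V i 2 * airfoilN M V 2 j"

definition airfoil_trace :: "real \<Rightarrow> real \<Rightarrow> real \<Rightarrow> real" where
  "airfoil_trace M V w = airfoilP M V w 1 1 + airfoilP M V w 2 2"

definition airfoil_det :: "real \<Rightarrow> real \<Rightarrow> real \<Rightarrow> real" where
  "airfoil_det M V w = airfoilP M V w 1 1 * airfoilP M V w 2 2 - airfoilP M V w 1 2 * airfoilP M V w 2 1"

definition airfoil_plunge :: "real \<Rightarrow> real \<Rightarrow> real \<Rightarrow> real" where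
  "airfoil_plunge M V q = - ((6*V^2*M^2 - 6000*M)*q^3 + 30*V^2*q - 300*M*q) / (1200*M)"

definition airfoil_pitch_sq :: "real \<Rightarrow> real \<Rightarrow> real" where
  "airfoil_pitch_sq M V = 5 * R3 M V / (M * R4 M V)"

lemma is_fixed_point_airfoilG_iff:
  assumes M: "M > 0" and V: "V > 0" and R4: "R4 M V \<noteq> 0"
  shows "is_fixed_point (airfoilG M V) (p, q) \<longleftrightarrow>
    p = airfoil_plunge M V q \<and> (q = 0 \<or> q\<^sup>2 = airfoil_pitch_sq M V)"
proof -
  define n1 where "n1 = (6*V^2*M^2 - 6000*M)*q^3 + 30*V^2*q + 1200*M*p - 300*M*q"
  define n2 where "n2 = (18*V^2*M^2 - 60000*M)*q^3 + 90*V^2*q + 1500*M*p - 3000*M*q"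
  have "airfoilG M V 1 (vec2 p q) zero_vel = n1 / (2100*V^2*M)"
    and "airfoilG M V 2 (vec2 p q) zero_vel = - n2 / (5250*V^2*M)"
    unfolding airfoilG_def vec2_def zero_vel_def n1_def n2_def by (simp_all add: algebra_simps)
  then have "is_fixed_point (airfoilG M V) (p, q) \<longleftrightarrow> n1 = 0 \<and> n2 = 0"
    unfolding is_fixed_point_def using M V by simp
  moreover have "n1 = 0 \<longleftrightarrow> p = airfoil_plunge M V q"
    unfolding airfoil_plunge_def n1_def using M by (auto simp: field_simps)
  moreover have "n2 = 5/4 * n1 + 21/2 * M * R4 M V * q * (q\<^sup>2 - airfoil_pitch_sq M V)"
    unfolding airfoil_pitch_sq_def R3_def R4_def n1_def n2_def
    using M R4 by (simp add: field_simps R4_def eval_nat_numeral)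
  ultimately show ?thesis using M R4 by auto
qed

lemma jacobi_stable_airfoilG_iff:
  assumes M: "M > 0" and V: "V > 0" and fixed: "is_fixed_point (airfoilG M V) (p, q)"
  shows "jacobi_stable (airfoilG M V) (p, q) \<longleftrightarrow>
    airfoil_trace M V (q\<^sup>2) < 0 \<and> 0 < airfoil_det M V (q\<^sup>2)"
proof -
  have "Pdev (airfoilG M V) i j (vec2 p q) zero_vel = airfoilP M V (q\<^sup>2) i j"
    if "i \<in> {1,2}" "j \<in> {1,2}" for i j
    using fixed unfolding is_fixed_point_def
    by (simp add: Pdev_at_fixed_point pdx_airfoilG[OF M V that] Ncoef_airfoilG[OF M V]
        airfoilP_def numeral_2_eq_2)
  then have Pmat_eq: "Pmat (airfoilG M V) (vec2 p q) =
      mat 2 2 (\<lambda>(i,j). complex_of_real (airfoilP M V (q\<^sup>2) (i + 1) (j + 1)))"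
    unfolding Pmat_def by (intro eq_matI) (auto simp: less_2_cases_iff)
  then show ?thesis
    unfolding jacobi_stable_def fst_conv snd_conv Pmat_eq eigenvalues_Re_neg_real_mat_2_iff
      airfoil_trace_def airfoil_det_def
    by (simp add: numeral_2_eq_2)
qed

lemma airfoil_trace_0:
  assumes "M > 0" "V > 0"
  shows "airfoil_trace M V 0 = - R1 M V / (275625*V^2*M^2)"
  using assms unfolding airfoil_trace_def airfoilP_def airfoilJ_def airfoilN_def R1_def
  by (simp add: field_simps) (simp add: algebra_simps eval_nat_numeral)

lemma airfoil_det_0:
  assumes "M > 0" "V > 0"
  shows "airfoil_det M V 0 = R2 M V / (689062500*V^4*M^4)"
  using assms unfolding airfoil_det_def airfoilP_def airfoilJ_def airfoilN_def R2_def
  by (simp add: divide_simps) (simp add: algebra_simps eval_nat_numeral)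

lemma airfoil_trace_pitch_sq:
  assumes "M > 0" "V > 0" "R4 M V \<noteq> 0"
  shows "airfoil_trace M V (airfoil_pitch_sq M V) = R5 M V / (275625*V^2*M^2*R4 M V)"
  using assms unfolding airfoil_trace_def airfoilP_def airfoilJ_def airfoilN_def airfoil_pitch_sq_def
  by (simp add: divide_simps R3_def R4_def R5_def) (simp add: algebra_simps eval_nat_numeral)

lemma airfoil_det_pitch_sq:
  assumes "M > 0" "V > 0" "R4 M V \<noteq> 0"
  shows "airfoil_det M V (airfoil_pitch_sq M V) = - R6 M V / (689062500*V^4*M^4*R4 M V)"
  using assms unfolding airfoil_det_def airfoilP_def airfoilJ_def airfoilN_def airfoil_pitch_sq_def
  by (simp add: divide_simps R3_def R4_def R6_def) (simp add: algebra_simps eval_nat_numeral)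

lemma card_jacobi_stable_fixed_points_airfoilG:
  assumes M: "M > 0" and V: "V > 0" and "R3 M V \<noteq> 0" "R4 M V \<noteq> 0"
  shows "card (jacobi_stable_fixed_points (airfoilG M V)) =
    of_bool (0 < R1 M V \<and> 0 < R2 M V)
    + 2 * of_bool (0 < R3 M V / R4 M V \<and> R5 M V / R4 M V < 0 \<and> R6 M V / R4 M V < 0)"
proof -
  have c1: "0 < 275625*V^2*M^2" and c2: "0 < 689062500*V^4*M^4"
    using M V by simp_all
  define s where "s = airfoil_pitch_sq M V"
  define stable where "stable w \<longleftrightarrow> airfoil_trace M V w < 0 \<and> 0 < airfoil_det M V w" for w
  have "s \<noteq> 0"
    unfolding s_def airfoil_pitch_sq_def using M assms(3,4) by simp
  have "jacobi_stable_fixed_points (airfoilG M V) =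
      (\<lambda>q. (airfoil_plunge M V q, q)) ` {q. (q = 0 \<or> q\<^sup>2 = s) \<and> stable (q\<^sup>2)}"
    unfolding jacobi_stable_fixed_points_def stable_def s_def
    by (auto simp: is_fixed_point_airfoilG_iff jacobi_stable_airfoilG_iff M V assms(4) image_iff)
  then have card: "card (jacobi_stable_fixed_points (airfoilG M V)) =
      of_bool (stable 0) + 2 * of_bool (0 < s \<and> stable s)"
    using \<open>s \<noteq> 0\<close> by (simp add: card_image inj_on_def card_zero_or_square_eq)
  have at_s: "airfoil_trace M V s = R5 M V / R4 M V / (275625*V^2*M^2)"
    "airfoil_det M V s = - (R6 M V / R4 M V) / (689062500*V^4*M^4)"
    unfolding s_def airfoil_trace_pitch_sq[OF M V assms(4)] airfoil_det_pitch_sq[OF M V assms(4)]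
    by (simp_all add: mult.commute)
  have "stable 0 \<longleftrightarrow> 0 < R1 M V \<and> 0 < R2 M V"
    and "stable s \<longleftrightarrow> R5 M V / R4 M V < 0 \<and> R6 M V / R4 M V < 0"
    unfolding stable_def airfoil_trace_0[OF M V] airfoil_det_0[OF M V] at_s
      pos_divide_less_eq[OF c1] pos_less_divide_eq[OF c2]
    by simp_all
  moreover have "0 < s \<longleftrightarrow> 0 < R3 M V / R4 M V"
    unfolding s_def airfoil_pitch_sq_def using M
    by (simp add: zero_less_divide_iff zero_less_mult_iff mult_less_0_iff)
  ultimately show ?thesis
    unfolding card by simp
qed

text \<open>The two sign implications below are Positivstellensatz certificates: a positive multiple
  of the target polynomial is written as a combination of products of the hypotheses with
  polynomials in M, V having positive coefficients.\<close>

lemma R2_neg_of_R1_pos_R3_neg: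
  fixes M V :: real
  assumes M: "M > 0" and V: "V > 0" and "R1 M V > 0" and "R3 M V < 0"
  shows "R2 M V < 0"
proof -
  define s0 where "s0 = 1610200478250*V^4 + 2682750660535*V^5 + 1336959053946*V^6
    + 335396005902000*M^2*V^3 + 44786381675490000*M^3*V^3 + 18231352867948500*M^3*V^4
    + 187142181831360000*M^4*V^3 + 94887199726200000*M^5*V^2"
  define s1 where "s1 = 70357470750*V^2 + 135920335720*V^3 + 67389084000*V^4
    + 190935738000*M*V^3 + 25242697116000*M^2*V^2"
  define s2 where "s2 = 331482247425*V^3 + 145600794054*V^4 + 2101528584540000*M^2*V
    + 555100732179000*M^2*V^2 + 5445506341333800000*M^3 + 10895215739836680000*M^3*V
    + 5759007471021451500*M^3*V^2 + 10891012682667600000*M^4 + 10893114211252140000*M^4*V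
    + 5445506341333800000*M^5"
  have "0 < s0" "0 < s1" "0 < s2"
    unfolding s0_def s1_def s2_def using M V
    by (intro add_pos_pos mult_pos_pos zero_less_power; simp)+
  then have "0 < s0 + s1 * R1 M V + s2 * (- R3 M V)"
    using assms(3,4) by (intro add_pos_pos mult_pos_pos) simp_all
  also have "s0 + s1 * R1 M V + s2 * (- R3 M V) = 353792691000 * (1 + M + V)\<^sup>2 * (- R2 M V)"
    unfolding s0_def s1_def s2_def R1_def R2_def R3_def
    by (simp add: algebra_simps eval_nat_numeral)
  finally have "0 < 353792691000 * (1 + M + V)\<^sup>2 * (- R2 M V)" .
  moreover have "0 < 353792691000 * (1 + M + V)\<^sup>2"
    using M V by simp
  ultimately have "0 < - R2 M V"
    by (rule zero_less_mult_pos)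
  then show ?thesis by simp
qed
lemma R6_pos_of_R3_pos_R4_pos:
  fixes M V :: real
  assumes M: "M > 0" and V: "V > 0" and R3: "R3 M V > 0" and R4: "R4 M V > 0"
  shows "R6 M V > 0"
proof -
  have "5000 < V^2 * M" "V^2 * M < 50 * M * M"
    using R3 R4 M unfolding R3_def R4_def by simp_all
  then have "10\<^sup>2 < M\<^sup>2"
    by (simp add: power2_eq_square)
  then have M10: "0 < M - 10"
    using power_less_imp_less_base[of 10 2 M] M by simp
  define s0 where "s0 = 47265000000000*V + 268170000000*V^2 + 521817000000*M*V^2 + 12*M*V^7
    + 52011825000*M^2*V^2 + 1380315*M^3*V^4"
  define s1 where "s1 = 4726500000000*V + 13083550000*V^3 + 6000*V^5 + 472650000000*M*V
    + 2616740000*M*V^3 + 9413400*M*V^4 + 1433890*M*V^5 + 47265000000*M^2*V + 249780000*M^2*V^3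
    + 286712*M^2*V^5"
  define s2 where "s2 = 261671000*V^3 + 107988*M*V^5 + 350260400*M^4*V + 335379675*M^5"
  define s3 where "s3 = 12*V^4 + 26544000*M^3*V + 66920325*M^4"
  define s4 where "s4 = 107268*V^2 + 198000*M*V^2"
  define s5 where "s5 = 13941732000*M^2*V^2 + 8100000*M^4*V^2 + 11015940*M^4*V^3 + 8100000*M^5*V^2"
  define s6 where "s6 = 952930065*M^3 + 928780772*M^3*V + 931500000*M^4"
  have "0 < s0" "0 < s1" "0 < s2" "0 < s3" "0 < s4" "0 < s5" "0 < s6"
    unfolding s0_def s1_def s2_def s3_def s4_def s5_def s6_def using M V
    by (intro add_pos_pos mult_pos_pos zero_less_power; simp)+
  then have "0 < s0 * (M - 10) + s1 * ((M - 10) * (M - 10)) + s2 * R4 M V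
      + s3 * (R4 M V * (M - 10)) + s4 * (R4 M V * R4 M V) + s5 * R3 M V + s6 * (R3 M V * R4 M V)"
    using M10 R3 R4 by (intro add_pos_pos mult_pos_pos) simp_all
  also have "\<dots> = 30 * (1 + M + V) * R6 M V"
    unfolding s0_def s1_def s2_def s3_def s4_def s5_def s6_def R3_def R4_def R6_def
    by (simp add: algebra_simps eval_nat_numeral)
  finally have "0 < 30 * (1 + M + V) * R6 M V" .
  moreover have "0 < 30 * (1 + M + V)"
    using M V by simp
  ultimately show ?thesis
    by (rule zero_less_mult_pos)
qed

theorem theorem4p2:
  fixes M V :: real
  assumes "M > 0" and "V > 0"
    and "(M - 10) * R1 M V * R2 M V * R3 M V * R4 M V * R5 M V * R6 M V \<noteq> 0"
  shows "(card (jacobi_stable_fixed_points (airfoilG M V)) = 1 \<longleftrightarrow>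
            (R1 M V > 0 \<and> R2 M V > 0 \<and> R4 M V > 0 \<and> R5 M V > 0 \<and> R6 M V > 0)
          \<or> (R1 M V > 0 \<and> R2 M V > 0 \<and> R3 M V > 0 \<and> R4 M V < 0)
          \<or> (R1 M V > 0 \<and> R2 M V > 0 \<and> R3 M V > 0 \<and> R4 M V > 0 \<and> R5 M V < 0 \<and> R6 M V > 0))
       \<and> (card (jacobi_stable_fixed_points (airfoilG M V)) = 2 \<longleftrightarrow>
            (R1 M V < 0 \<and> R3 M V < 0 \<and> R4 M V < 0 \<and> R5 M V > 0 \<and> R6 M V > 0)
          \<or> (R1 M V > 0 \<and> R2 M V < 0 \<and> R3 M V < 0 \<and> R4 M V < 0 \<and> R5 M V > 0 \<and> R6 M V > 0))"
proof -
  note M = assms(1) and V = assms(2)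
  have "r < 0 \<longleftrightarrow> \<not> 0 < r" if "r \<noteq> 0" for r :: real
    using that by linarith
  then have signs: "R1 M V < 0 \<longleftrightarrow> \<not> 0 < R1 M V" "R2 M V < 0 \<longleftrightarrow> \<not> 0 < R2 M V"
      "R3 M V < 0 \<longleftrightarrow> \<not> 0 < R3 M V" "R4 M V < 0 \<longleftrightarrow> \<not> 0 < R4 M V"
      "R5 M V < 0 \<longleftrightarrow> \<not> 0 < R5 M V" "R6 M V < 0 \<longleftrightarrow> \<not> 0 < R6 M V"
    using assms(3) by auto
  have R3: "R3 M V \<noteq> 0" and R4: "R4 M V \<noteq> 0"
    using assms(3) by auto
  show ?thesis
    unfolding card_jacobi_stable_fixed_points_airfoilG[OF M V R3 R4]
    using R2_neg_of_R1_pos_R3_neg[OF M V] R6_pos_of_R3_pos_R4_pos[OF M V]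
    by (auto simp: divide_less_0_iff zero_less_divide_iff signs)
qed

end
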